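(* For every algorithm $A$ for List Update with Time Windows there exists an algorithm $B$ such that for every input sequence $\sigma$: (1) whenever $B$ performs an access serving requests at some time $t$, at least one of the requests it serves at time $t$ has deadline exactly $t$; and (2) $B(\sigma)\le A(\sigma)$.
   Context: List Update with Time Windows. A set $\mathbb{E}$ of $n$ elements is kept in an ordered list (position $1$ is the head). An input $\sigma$ is a sequence of requests $r_1,\dots,r_m$; request $r_k$ specifies an element $e_k\in\mathbb{E}$, an arrival time $a_k$ and a deadline $q_k\ge a_k$. At any time an algorithm may (a) perform an access up to position $i$, at cost $i$, which serves every pending request whose element currently lies in positions $1,\dots,i$; (b) swap two adjacent elements at cost $1$. Actions are instantaneous. An algorithm is valid if it serves every request at some time in $[a_k,q_k]$. The cost $A(\sigma)$ of an algorithm $A$ on $\sigma$ is total access cost plus number of swaps. *)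

theory Defs
  imports Main "HOL.Real"
begin

text \<open>The list is an ordered list of distinct
elements (position 1 is the head).
A schedule (the behaviour of an algorithm on one input) is a finite list of timed
actions; times are nondecreasing and actions at the same time are executed in
list order.\<close>

datatype action = Access nat | Swap nat
  (* Access i : access up to position i (cost i);
     Swap i   : swap the elements at positions i and i+1 (cost 1) *)

type_synonym 'a request = "'a \<times> real \<times> real"
type_synonym schedule = "(real \<times> action) list"

definition elem :: "'a request \<Rightarrow> 'a" where "elem r = fst r"
definition arr :: "'a request \<Rightarrow> real" where "arr r = fst (snd r)"
definition dl :: "'a request \<Rightarrow> real" where "dl r = snd (snd r)"

text \<open>1-based position of an element in the list.\<close>
definition pos :: "'a \<Rightarrow> 'a list \<Rightarrow> nat" where
  "pos e L = Suc (LEAST i. i < length L \<and> L ! i = e)"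

fun apply_action :: "action \<Rightarrow> 'a list \<Rightarrow> 'a list" where
  "apply_action (Access i) L = L"
| "apply_action (Swap i) L = L[i - 1 := L ! i, i := L ! (i - 1)]"

text \<open>List configuration just before the j-th action (0-based) of schedule S.\<close>
definition config :: "'a list \<Rightarrow> schedule \<Rightarrow> nat \<Rightarrow> 'a list" where
  "config L0 S j = fold (apply_action \<circ> snd) (take j S) L0"

fun action_ok :: "nat \<Rightarrow> action \<Rightarrow> bool" where
  "action_ok n (Access i) = (1 \<le> i \<and> i \<le> n)"
| "action_ok n (Swap i) = (1 \<le> i \<and> i < n)"

definition sched_ok :: "nat \<Rightarrow> schedule \<Rightarrow> bool" where
  "sched_ok n S = (sorted (map fst S) \<and> (\<forall>x\<in>set S. action_ok n (snd x)))"

definition covers :: "'a list \<Rightarrow> schedule \<Rightarrow> 'a request \<Rightarrow> nat \<Rightarrow> bool" where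
  "covers L0 S r j = (j < length S \<and>
     (case snd (S ! j) of
        Access i \<Rightarrow> arr r \<le> fst (S ! j) \<and> pos (elem r) (config L0 S j) \<le> i
      | Swap _ \<Rightarrow> False))"

definition serves :: "'a list \<Rightarrow> schedule \<Rightarrow> 'a request \<Rightarrow> nat \<Rightarrow> bool" where
  "serves L0 S r j = (covers L0 S r j \<and> (\<forall>j'<j. \<not> covers L0 S r j'))"

definition valid :: "'a list \<Rightarrow> 'a request list \<Rightarrow> schedule \<Rightarrow> bool" where
  "valid L0 \<sigma> S = (sched_ok (length L0) S \<and>
     (\<forall>r\<in>set \<sigma>. \<exists>j. serves L0 S r j \<and> fst (S ! j) \<le> dl r))"

fun action_cost :: "action \<Rightarrow> nat" where
  "action_cost (Access i) = i"
| "action_cost (Swap i) = 1"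

definition cost :: "schedule \<Rightarrow> nat" where
  "cost S = sum_list (map (action_cost \<circ> snd) S)"

definition deadline_lazy :: "'a list \<Rightarrow> 'a request list \<Rightarrow> schedule \<Rightarrow> bool" where
  "deadline_lazy L0 \<sigma> S = (\<forall>j<length S.
     (\<exists>r\<in>set \<sigma>. serves L0 S r j) \<longrightarrow> (\<exists>r\<in>set \<sigma>. serves L0 S r j \<and> dl r = fst (S ! j)))"

definition wf_input :: "'a list \<Rightarrow> 'a request list \<Rightarrow> bool" where
  "wf_input L0 \<sigma> = (\<forall>r\<in>set \<sigma>. elem r \<in> set L0 \<and> arr r \<le> dl r)"

end

theory Submission
  imports Defs
begin

text \<open>
  B follows A lazily. It acts only at a deadline \<open>\<tau>\<close> of a request it has not yet served, and then
  replays in one block at time \<open>\<tau>\<close> all actions A performed since the previous block: from A's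
  list c at that point, B swaps a set P to the front, accesses the first |P| positions, and swaps
  on to A's list c' at time \<open>\<tau>\<close>. Here P consists of the elements A accessed in between, together
  with everything that precedes one of them in both c and c'. Because P is closed downwards in
  the common order of c and c', the two swap phases need at most \<open>inv(c, c')\<close> swaps in total,
  and the potential \<open>inv(c, x) + |P(x)|\<close> (x the current list of A, P(x) defined as above from the
  elements accessed so far) shows that A paid at least \<open>inv(c, c') + |P|\<close> in between.
  The access serves every request A served in between, in particular the one whose deadline is
  \<open>\<tau>\<close>, so B is deadline-lazy, valid, and no more expensive than A.
\<close>

section \<open>Relative order and inversions\<close>

fun precedes :: "'a list \<Rightarrow> 'a \<Rightarrow> 'a \<Rightarrow> bool" where
  "precedes [] u v = False"
| "precedes (a # xs) u v = ((u = a \<and> v \<in> set xs) \<or> precedes xs u v)"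

lemma precedes_in_set: "precedes xs u v \<Longrightarrow> u \<in> set xs \<and> v \<in> set xs"
  by (induction xs) auto

lemma precedes_append:
  "precedes (xs @ ys) u v \<longleftrightarrow> precedes xs u v \<or> precedes ys u v \<or> (u \<in> set xs \<and> v \<in> set ys)"
  by (induction xs) auto

lemma precedes_filter: "precedes (filter p xs) u v \<longleftrightarrow> p u \<and> p v \<and> precedes xs u v"
  by (induction xs) auto

lemma precedes_irrefl: "distinct xs \<Longrightarrow> \<not> precedes xs u u"
  by (induction xs) (auto dest: precedes_in_set)

lemma precedes_asym: "distinct xs \<Longrightarrow> precedes xs u v \<Longrightarrow> \<not> precedes xs v u"
  by (induction xs) (auto dest: precedes_in_set)

lemma precedes_trans: "distinct xs \<Longrightarrow> precedes xs u v \<Longrightarrow> precedes xs v w \<Longrightarrow> precedes xs u w"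
  by (induction xs) (auto dest: precedes_in_set)

lemma precedes_total:
  "u \<in> set xs \<Longrightarrow> v \<in> set xs \<Longrightarrow> u \<noteq> v \<Longrightarrow> precedes xs u v \<or> precedes xs v u"
  by (induction xs) auto

lemma precedes_swap:
  assumes "distinct (ys @ a # b # zs)"
  shows "precedes (ys @ b # a # zs) u v \<longleftrightarrow>
           (u, v) = (b, a) \<or> (u, v) \<noteq> (a, b) \<and> precedes (ys @ a # b # zs) u v"
  using assms by (auto simp: precedes_append dest: precedes_in_set)

lemma precedes_adjacent:
  assumes "distinct (ys @ a # b # zs)"
  shows "precedes (ys @ a # b # zs) a b" "\<not> precedes (ys @ a # b # zs) b a"
  using assms by (auto simp: precedes_append dest: precedes_in_set)

lemma apply_Swap_append: "apply_action (Swap (Suc (length ys))) (ys @ a # b # zs) = ys @ b # a # zs"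
  by (simp add: list_update_append nth_append)

lemma Swap_decompose:
  assumes "1 \<le> i" "i < length x"
  obtains ys a b zs where "x = ys @ a # b # zs" "apply_action (Swap i) x = ys @ b # a # zs"
proof -
  obtain k where k: "i = Suc k" using assms by (cases i) auto
  then have "x = take k x @ x ! k # x ! Suc k # drop (Suc (Suc k)) x"
    using assms by (metis Cons_nth_drop_Suc Suc_lessD append_take_drop_id)
  moreover have "length (take k x) = k" using assms k by simp
  ultimately show thesis using that k apply_Swap_append by metis
qed

definition inversions :: "'a list \<Rightarrow> 'a list \<Rightarrow> nat" where
  "inversions x y = card {(u, v). precedes x u v \<and> precedes y v u}"

lemma finite_inversion_pairs: "finite {(u, v). precedes x u v \<and> precedes y v u}"
  by (rule finite_subset[of _ "set x \<times> set x"]) (auto dest: precedes_in_set)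

lemma inversions_self:
  assumes "distinct x" shows "inversions x x = 0"
proof -
  have "{(u, v). precedes x u v \<and> precedes x v u} = {}" using precedes_asym[OF assms] by auto
  then show ?thesis unfolding inversions_def by (metis card.empty)
qed

lemma inversions_commute: "inversions x y = inversions y x"
proof -
  have "{(u, v). precedes y u v \<and> precedes x v u} = prod.swap ` {(u, v). precedes x u v \<and> precedes y v u}"
    by auto
  then show ?thesis unfolding inversions_def by (simp add: card_image)
qed

lemma inversions_swap:
  assumes x: "distinct (ys @ a # b # zs)" and y: "distinct y" "precedes y b a"
  shows "inversions (ys @ a # b # zs) y = Suc (inversions (ys @ b # a # zs) y)"
proof -
  let ?E = "\<lambda>x. {(u, v). precedes x u v \<and> precedes y v u}"
  have "a \<noteq> b" "\<not> precedes y a b" using x precedes_asym[OF y] by auto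
  then have "?E (ys @ a # b # zs) = insert (a, b) (?E (ys @ b # a # zs))"
    using y(2) precedes_adjacent[OF x] by (auto simp: precedes_swap[OF x])
  moreover have "(a, b) \<notin> ?E (ys @ b # a # zs)"
  proof -
    have "distinct (ys @ b # a # zs)" using x by auto
    from precedes_adjacent(2)[OF this] show ?thesis by simp
  qed
  ultimately show ?thesis unfolding inversions_def by (simp add: finite_inversion_pairs)
qed

lemma inversions_swap_cases:
  assumes x: "distinct (ys @ a # b # zs)" and c: "distinct c" "set c = set (ys @ a # b # zs)"
  shows "precedes c a b \<and> inversions c (ys @ b # a # zs) = Suc (inversions c (ys @ a # b # zs))
       \<or> precedes c b a \<and> inversions c (ys @ a # b # zs) = Suc (inversions c (ys @ b # a # zs))"
proof -
  have "a \<in> set c" "b \<in> set c" "a \<noteq> b" using x c by auto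
  then consider "precedes c a b" | "precedes c b a" by (metis precedes_total)
  then show ?thesis
  proof cases
    case 1
    have "distinct (ys @ b # a # zs)" using x by auto
    from inversions_swap[OF this c(1) 1] have
      "inversions c (ys @ b # a # zs) = Suc (inversions c (ys @ a # b # zs))"
      by (simp only: inversions_commute[of c])
    with 1 show ?thesis by (rule disjI1[OF conjI])
  next
    case 2
    from inversions_swap[OF x c(1) 2] have
      "inversions c (ys @ a # b # zs) = Suc (inversions c (ys @ b # a # zs))"
      by (simp only: inversions_commute[of c])
    with 2 show ?thesis by (rule disjI2[OF conjI])
  qed
qed

lemma sorted_wrt_precedes_if_adjacent:
  assumes "distinct y" "set x \<subseteq> set y"
    and "\<And>ys a b zs. x = ys @ a # b # zs \<Longrightarrow> precedes y a b"
  shows "sorted_wrt (precedes y) x"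
  using assms(2,3)
proof (induction x)
  case Nil then show ?case by simp
next
  case (Cons a x)
  have sorted: "sorted_wrt (precedes y) x"
  proof (rule Cons.IH)
    show "set x \<subseteq> set y" using Cons.prems by auto
    fix ys a' b zs assume "x = ys @ a' # b # zs"
    then show "precedes y a' b" using Cons.prems(2)[of "a # ys" a' b zs] by simp
  qed
  show ?case
  proof (cases x)
    case Nil then show ?thesis by simp
  next
    case (Cons b rest)
    have "precedes y a b" using Cons.prems(2)[of "[]" a b rest] Cons by simp
    then have "\<forall>c\<in>set x. precedes y a c"
      using sorted Cons precedes_trans[OF assms(1)] by auto
    then show ?thesis using sorted by simp
  qed
qed

lemma sorted_wrt_precedes_eq:
  assumes "sorted_wrt (precedes y) x" "distinct y" "distinct x" "set x = set y"
  shows "x = y"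
  using assms
proof (induction x arbitrary: y)
  case Nil then show ?case by simp
next
  case (Cons a x)
  obtain b y' where y: "y = b # y'" using Cons.prems(4) by (cases y) auto
  have a_first: "\<forall>c\<in>set x. precedes y a c" "sorted_wrt (precedes y) x" using Cons.prems(1) by auto
  have "a = b"
  proof (rule ccontr)
    assume "a \<noteq> b"
    then have "b \<in> set x" using Cons.prems(4) y by auto
    then have "precedes y' a b" using a_first y \<open>a \<noteq> b\<close> by auto
    then show False using Cons.prems(2) y by (auto dest: precedes_in_set)
  qed
  then have "set x = set y'" using Cons.prems(2-4) y by auto
  moreover have "sorted_wrt (precedes y') x"
    using sorted_wrt_mono_rel[OF _ a_first(2), of "precedes y'"] y \<open>a = b\<close> Cons.prems(3) by auto
  ultimately have "x = y'" using Cons.IH Cons.prems(2,3) y by auto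
  then show ?case using y \<open>a = b\<close> by simp
qed

lemma adjacent_inversion_exists:
  assumes "distinct x" "distinct y" "set x = set y" "x \<noteq> y"
  obtains ys a b zs where "x = ys @ a # b # zs" "precedes y b a"
proof -
  have "\<not> (\<forall>ys a b zs. x = ys @ a # b # zs \<longrightarrow> precedes y a b)"
  proof
    assume "\<forall>ys a b zs. x = ys @ a # b # zs \<longrightarrow> precedes y a b"
    then have "sorted_wrt (precedes y) x"
      using sorted_wrt_precedes_if_adjacent[OF assms(2)] assms(3) by blast
    then show False using sorted_wrt_precedes_eq[OF _ assms(2,1,3)] assms(4) by simp
  qed
  then obtain ys a b zs where x: "x = ys @ a # b # zs" "\<not> precedes y a b" by blast
  moreover have "a \<in> set y" "b \<in> set y" "a \<noteq> b" using assms(1,3) x by auto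
  ultimately have "precedes y b a" using precedes_total[of a y b] by simp
  with x(1) show thesis by (rule that)
qed

definition swap_actions :: "nat \<Rightarrow> action list \<Rightarrow> bool" where
  "swap_actions n \<beta> \<longleftrightarrow> (\<forall>a\<in>set \<beta>. \<exists>i. a = Swap i \<and> 1 \<le> i \<and> i < n)"

lemma swap_actions_sorting:
  assumes "distinct x" "distinct y" "set x = set y"
  obtains \<beta> where "swap_actions (length x) \<beta>" "fold apply_action \<beta> x = y"
    "length \<beta> \<le> inversions x y"
  using assms
proof (induction "inversions x y" arbitrary: x thesis rule: less_induct)
  case less
  show ?case
  proof (cases "x = y")
    case True
    then show ?thesis using less.prems(1)[of "[]"] by (simp add: swap_actions_def)
  next
    case False
    then obtain ys a b zs where x: "x = ys @ a # b # zs" and y: "precedes y b a"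
      using adjacent_inversion_exists less.prems(2-4) by blast
    let ?x' = "ys @ b # a # zs"
    have inv: "inversions x y = Suc (inversions ?x' y)"
      using inversions_swap less.prems(2,3) x y by simp
    have "distinct ?x'" "set ?x' = set y" using less.prems(2,4) x by auto
    then obtain \<beta> where \<beta>: "swap_actions (length ?x') \<beta>" "fold apply_action \<beta> ?x' = y"
        "length \<beta> \<le> inversions ?x' y"
      using less.hyps[of ?x'] inv less.prems(3) by auto
    show ?thesis
    proof (rule less.prems(1)[of "Swap (Suc (length ys)) # \<beta>"])
      show "swap_actions (length x) (Swap (Suc (length ys)) # \<beta>)"
        using \<beta>(1) x unfolding swap_actions_def by auto
      show "fold apply_action (Swap (Suc (length ys)) # \<beta>) x = y"
        using \<beta>(2) x by (simp add: apply_Swap_append del: apply_action.simps)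
      show "length (Swap (Suc (length ys)) # \<beta>) \<le> inversions x y" using \<beta>(3) inv by simp
    qed
  qed
qed

section \<open>The cost of a window of actions\<close>

lemma apply_action_ok:
  assumes "action_ok (length x) a"
  shows "length (apply_action a x) = length x" "set (apply_action a x) = set x"
    "distinct x \<Longrightarrow> distinct (apply_action a x)"
proof -
  have "length (apply_action a x) = length x \<and> set (apply_action a x) = set x \<and>
    (distinct x \<longrightarrow> distinct (apply_action a x))"
  proof (cases a)
    case (Swap i)
    then have "1 \<le> i" "i < length x" using assms by auto
    then obtain ys b c zs where "x = ys @ b # c # zs" "apply_action (Swap i) x = ys @ c # b # zs"
      by (rule Swap_decompose)
    then show ?thesis using Swap by auto
  qed simp
  then show "length (apply_action a x) = length x" "set (apply_action a x) = set x"
    "distinct x \<Longrightarrow> distinct (apply_action a x)" by auto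
qed

lemma fold_apply_action_ok:
  assumes "\<forall>a\<in>set as. action_ok (length x) a"
  shows "length (fold apply_action as x) = length x" "set (fold apply_action as x) = set x"
    "distinct x \<Longrightarrow> distinct (fold apply_action as x)"
proof -
  have "length (fold apply_action as x) = length x \<and> set (fold apply_action as x) = set x \<and>
    (distinct x \<longrightarrow> distinct (fold apply_action as x))"
    using assms
  proof (induction as arbitrary: x)
    case (Cons a as)
    note ok = apply_action_ok[OF bspec[OF Cons.prems list.set_intros(1)]]
    show ?case using Cons.IH[of "apply_action a x"] Cons.prems ok by simp
  qed simp
  then show "length (fold apply_action as x) = length x" "set (fold apply_action as x) = set x"
    "distinct x \<Longrightarrow> distinct (fold apply_action as x)" by auto
qed

fun accessed :: "action list \<Rightarrow> 'a list \<Rightarrow> 'a set" where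
  "accessed [] x = {}"
| "accessed (a # \<alpha>) x =
     (case a of Access i \<Rightarrow> set (take i x) | Swap i \<Rightarrow> {}) \<union> accessed \<alpha> (apply_action a x)"

lemma accessed_subset:
  "\<forall>a\<in>set \<alpha>. action_ok (length x) a \<Longrightarrow> accessed \<alpha> x \<subseteq> set x"
proof (induction \<alpha> arbitrary: x)
  case (Cons a \<alpha>)
  note ok = apply_action_ok[OF bspec[OF Cons.prems list.set_intros(1)]]
  have "accessed \<alpha> (apply_action a x) \<subseteq> set x" using Cons.IH[of "apply_action a x"] Cons.prems ok by simp
  moreover have "(case a of Access i \<Rightarrow> set (take i x) | Swap i \<Rightarrow> {}) \<subseteq> set x"
    by (cases a) (auto dest: in_set_takeD)
  ultimately show ?case by simp
qed simp

lemma accessed_nth_Access: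
  "j < length \<alpha> \<Longrightarrow> \<alpha> ! j = Access i \<Longrightarrow> set (take i (fold apply_action (take j \<alpha>) x)) \<subseteq> accessed \<alpha> x"
proof (induction \<alpha> arbitrary: x j)
  case (Cons a \<alpha>)
  then show ?case by (cases j) auto
qed simp

definition lower_set :: "'a list \<Rightarrow> 'a list \<Rightarrow> 'a set \<Rightarrow> 'a set" where
  "lower_set c x W = {z. \<exists>w\<in>W. z = w \<or> precedes c z w \<and> precedes x z w}"

lemma lower_set_subset: "lower_set c x W \<subseteq> W \<union> set c"
  unfolding lower_set_def by (auto dest: precedes_in_set)

lemma finite_lower_set: "finite W \<Longrightarrow> finite (lower_set c x W)"
  using lower_set_subset by (rule finite_subset) simp

lemma lower_set_downward:
  assumes "distinct c" "distinct x" "precedes c u v" "precedes x u v" "v \<in> lower_set c x W"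
  shows "u \<in> lower_set c x W"
  using assms precedes_trans[OF assms(1)] precedes_trans[OF assms(2)] unfolding lower_set_def by blast

lemma precedes_take:
  assumes "distinct x" "precedes x z w" "w \<in> set (take i x)"
  shows "z \<in> set (take i x)"
proof -
  have "w \<notin> set (drop i x)" using assms(1,3) by (metis distinct_append append_take_drop_id disjoint_iff)
  moreover have "precedes (take i x @ drop i x) z w" using assms(2) by simp
  ultimately show ?thesis unfolding precedes_append by (auto dest: precedes_in_set)
qed

lemma lower_set_swap:
  assumes "distinct (ys @ a # b # zs)"
  shows "lower_set c (ys @ b # a # zs) W \<subseteq> lower_set c (ys @ a # b # zs) W \<union> {z. z = b \<and> precedes c b a}"
proof
  fix z assume "z \<in> lower_set c (ys @ b # a # zs) W"
  then obtain w where w: "w \<in> W" "z = w \<or> precedes c z w \<and> precedes (ys @ b # a # zs) z w"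
    unfolding lower_set_def by blast
  then have "z = w \<or> z = b \<and> precedes c b a \<or> precedes c z w \<and> precedes (ys @ a # b # zs) z w"
    using precedes_swap[OF assms, of z w] by auto
  then show "z \<in> lower_set c (ys @ a # b # zs) W \<union> {z. z = b \<and> precedes c b a}"
    using w(1) unfolding lower_set_def by blast
qed

lemma potential_swap:
  assumes x: "distinct (ys @ a # b # zs)" and c: "distinct c" "set c = set (ys @ a # b # zs)"
    and W: "finite W"
  shows "inversions c (ys @ b # a # zs) + card (lower_set c (ys @ b # a # zs) W)
    \<le> inversions c (ys @ a # b # zs) + card (lower_set c (ys @ a # b # zs) W) + 1"
proof -
  let ?x = "ys @ a # b # zs" and ?x' = "ys @ b # a # zs"
  have fin: "finite (lower_set c ?x W)" using finite_lower_set[OF W] .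
  from inversions_swap_cases[OF x c] show ?thesis
  proof
    assume ab: "precedes c a b \<and> inversions c ?x' = Suc (inversions c ?x)"
    then have "\<not> precedes c b a" using precedes_asym[OF c(1)] by blast
    then have "lower_set c ?x' W \<subseteq> lower_set c ?x W" using lower_set_swap[OF x, of c W] by auto
    then have "card (lower_set c ?x' W) \<le> card (lower_set c ?x W)" using fin by (rule card_mono[rotated])
    then show ?thesis using ab by simp
  next
    assume ba: "precedes c b a \<and> inversions c ?x = Suc (inversions c ?x')"
    have "lower_set c ?x' W \<subseteq> insert b (lower_set c ?x W)" using lower_set_swap[OF x, of c W] by auto
    then have "card (lower_set c ?x' W) \<le> card (insert b (lower_set c ?x W))"
      using fin by (intro card_mono) auto
    also have "\<dots> \<le> Suc (card (lower_set c ?x W))" by (simp add: card_insert_if fin)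
    finally show ?thesis using ba by simp
  qed
qed

lemma potential_access:
  assumes "distinct x" "finite W"
  shows "card (lower_set c x (W \<union> set (take i x))) \<le> card (lower_set c x W) + i"
proof -
  have "lower_set c x (W \<union> set (take i x)) \<subseteq> lower_set c x W \<union> set (take i x)"
    using precedes_take[OF assms(1)] unfolding lower_set_def by blast
  then have "card (lower_set c x (W \<union> set (take i x))) \<le> card (lower_set c x W \<union> set (take i x))"
    using finite_lower_set[OF assms(2)] by (intro card_mono) auto
  also have "\<dots> \<le> card (lower_set c x W) + card (set (take i x))" by (rule card_Un_le)
  also have "card (set (take i x)) \<le> i" using card_length[of "take i x"] by simp
  finally show ?thesis by simp
qed

text \<open>The potential \<open>inversions c x + card (lower_set c x W)\<close>, where x is the current list
  and W the set of elements accessed so far, grows by at most 1 per swap and by at most i per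
  access up to position i; hence it is bounded by the cost of the actions performed.\<close>

lemma potential_fold:
  assumes "distinct c" "distinct x" "set x = set c" "finite W" "\<forall>a\<in>set \<alpha>. action_ok (length x) a"
  shows "inversions c (fold apply_action \<alpha> x) + card (lower_set c (fold apply_action \<alpha> x) (W \<union> accessed \<alpha> x))
     \<le> inversions c x + card (lower_set c x W) + sum_list (map action_cost \<alpha>)"
  using assms(2-5)
proof (induction \<alpha> arbitrary: x W)
  case (Cons a \<alpha>)
  let ?x' = "apply_action a x"
  note ok = apply_action_ok[OF bspec[OF Cons.prems(4) list.set_intros(1)]]
  show ?case
  proof (cases a)
    case (Access i)
    have "finite (W \<union> set (take i x))" using Cons.prems(3) by simp
    from Cons.IH[OF Cons.prems(1,2) this] Cons.prems(4)
    have "inversions c (fold apply_action \<alpha> x) + card (lower_set c (fold apply_action \<alpha> x) (W \<union> set (take i x) \<union> accessed \<alpha> x))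
      \<le> inversions c x + card (lower_set c x (W \<union> set (take i x))) + sum_list (map action_cost \<alpha>)"
      by simp
    then show ?thesis using potential_access[OF Cons.prems(1,3), of c i] Access by (simp add: sup_assoc)
  next
    case (Swap i)
    then have "1 \<le> i" "i < length x" using Cons.prems(4) by auto
    then obtain ys b d zs where x: "x = ys @ b # d # zs" and x': "?x' = ys @ d # b # zs"
      using Swap_decompose Swap by metis
    have "inversions c (fold apply_action \<alpha> ?x') + card (lower_set c (fold apply_action \<alpha> ?x') (W \<union> accessed \<alpha> ?x'))
      \<le> inversions c ?x' + card (lower_set c ?x' W) + sum_list (map action_cost \<alpha>)"
      using Cons.IH[of ?x' W] ok Cons.prems by simp
    moreover have "inversions c ?x' + card (lower_set c ?x' W) \<le> inversions c x + card (lower_set c x W) + 1"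
      using potential_swap[of ys b d zs c W] x x' Cons.prems(1-3) assms(1) by simp
    ultimately show ?thesis using Swap by simp
  qed
qed simp

lemma potential_bound:
  assumes "distinct c" "\<forall>a\<in>set \<alpha>. action_ok (length c) a"
  shows "inversions c (fold apply_action \<alpha> c) + card (lower_set c (fold apply_action \<alpha> c) (accessed \<alpha> c))
     \<le> sum_list (map action_cost \<alpha>)"
proof -
  have "lower_set c c {} = {}" unfolding lower_set_def by simp
  then show ?thesis
    using potential_fold[OF assms(1,1) refl finite.emptyI assms(2)] inversions_self[OF assms(1)] by simp
qed

definition move_to_front :: "'a set \<Rightarrow> 'a list \<Rightarrow> 'a list" where
  "move_to_front P x = filter (\<lambda>z. z \<in> P) x @ filter (\<lambda>z. z \<notin> P) x"

lemma set_move_to_front [simp]: "set (move_to_front P x) = set x"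
  unfolding move_to_front_def by auto

lemma distinct_move_to_front [simp]: "distinct (move_to_front P x) \<longleftrightarrow> distinct x"
  unfolding move_to_front_def by (induction x) auto

lemma length_move_to_front [simp]: "length (move_to_front P x) = length x"
  unfolding move_to_front_def by (metis length_append sum_length_filter_compl)

lemma set_take_move_to_front:
  assumes "distinct x" "P \<subseteq> set x"
  shows "set (take (card P) (move_to_front P x)) = P"
proof -
  have P: "set (filter (\<lambda>z. z \<in> P) x) = P" using assms(2) by auto
  then have "length (filter (\<lambda>z. z \<in> P) x) = card P"
    using distinct_card[of "filter (\<lambda>z. z \<in> P) x"] assms(1) by simp
  then show ?thesis using P unfolding move_to_front_def by simp
qed

lemma precedes_move_to_front:
  "precedes (move_to_front P x) u v \<longleftrightarrow>
     (u \<in> P \<longleftrightarrow> v \<in> P) \<and> precedes x u v \<or> u \<in> P \<and> u \<in> set x \<and> v \<notin> P \<and> v \<in> set x"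
  unfolding move_to_front_def precedes_append precedes_filter by auto

text \<open>Both kinds of inversions on the left are inversions between c and c' (this is where the
  downward closure of P is used), and no pair is an inversion of both kinds.\<close>

lemma inversions_move_to_front:
  assumes c: "distinct c" "distinct c'" "set c' = set c"
    and P: "\<And>u v. precedes c u v \<Longrightarrow> precedes c' u v \<Longrightarrow> v \<in> P \<Longrightarrow> u \<in> P"
  shows "inversions c (move_to_front P c') + inversions (move_to_front P c') c' \<le> inversions c c'"
proof -
  let ?m = "move_to_front P c'"
  let ?I = "\<lambda>x y. {(u, v). precedes x u v \<and> precedes y v u}"
  have disj: "?I c ?m \<inter> ?I ?m c' = {}" using precedes_asym[of ?m] c(2) by auto
  have "?I c ?m \<subseteq> ?I c c'"
  proof clarify
    fix u v assume uv: "precedes c u v" "precedes ?m v u"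
    have "u \<in> set c'" "v \<in> set c'" "u \<noteq> v"
      using uv(1) c precedes_irrefl[OF c(1)] by (auto dest: precedes_in_set)
    then show "precedes c' v u"
      using uv P[of u v] precedes_total[of u c' v] unfolding precedes_move_to_front by blast
  qed
  moreover have "?I ?m c' \<subseteq> ?I c c'"
  proof clarify
    fix u v assume uv: "precedes ?m u v" "precedes c' v u"
    have "u \<in> set c" "v \<in> set c" "u \<noteq> v"
      using uv(2) c precedes_irrefl[OF c(2)] by (auto dest: precedes_in_set)
    moreover have "u \<in> P" "v \<notin> P"
      using uv precedes_asym[OF c(2) uv(2)] unfolding precedes_move_to_front by blast+
    ultimately show "precedes c u v" using uv(2) P[of v u] precedes_total[of u c v] by blast
  qed
  ultimately have "card (?I c ?m \<union> ?I ?m c') \<le> card (?I c c')"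
    using finite_inversion_pairs by (intro card_mono) auto
  moreover have "card (?I c ?m \<union> ?I ?m c') = card (?I c ?m) + card (?I ?m c')"
    using finite_inversion_pairs finite_inversion_pairs disj by (rule card_Un_disjoint)
  ultimately show ?thesis unfolding inversions_def by simp
qed

section \<open>Schedules\<close>

lemma pos_le_iff_in_take:
  assumes "e \<in> set x"
  shows "pos e x \<le> i \<longleftrightarrow> e \<in> set (take i x)"
proof
  let ?l = "LEAST k. k < length x \<and> x ! k = e"
  assume "pos e x \<le> i"
  then have "?l < i" unfolding pos_def by simp
  moreover have "?l < length x \<and> x ! ?l = e"
    using assms by (metis (mono_tags, lifting) LeastI in_set_conv_nth)
  ultimately have "take i x ! ?l = e" "?l < length (take i x)" by simp_all
  then show "e \<in> set (take i x)" by (metis nth_mem)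
next
  assume "e \<in> set (take i x)"
  then obtain k where k: "k < length x" "x ! k = e" "k < i" by (auto simp: in_set_conv_nth)
  then have "(LEAST k. k < length x \<and> x ! k = e) \<le> k" by (intro Least_le) simp
  then show "pos e x \<le> i" unfolding pos_def using k(3) by simp
qed

lemma config_fold: "config L0 S k = fold apply_action (map snd (take k S)) L0"
  unfolding config_def by (simp add: fold_map)

lemma config_append: "config L0 (B @ T) (length B + j) = fold (apply_action \<circ> snd) (take j T) (config L0 B (length B))"
  unfolding config_def by simp

lemma config_ok:
  assumes "sched_ok (length L0) S" "distinct L0"
  shows "length (config L0 S k) = length L0" "set (config L0 S k) = set L0" "distinct (config L0 S k)"
proof -
  have "\<forall>a\<in>set (map snd (take k S)). action_ok (length L0) a"
    using assms(1) unfolding sched_ok_def by (auto dest: in_set_takeD)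
  from fold_apply_action_ok[OF this] assms(2)
  show "length (config L0 S k) = length L0" "set (config L0 S k) = set L0" "distinct (config L0 S k)"
    unfolding config_fold by auto
qed

lemma config_window:
  assumes "Np \<le> k" "k \<le> N"
  shows "config L0 S k = fold apply_action (take (k - Np) (map snd (drop Np (take N S)))) (config L0 S Np)"
proof -
  have "take k S = take Np S @ take (k - Np) (drop Np (take N S))"
    using assms take_add[of Np "k - Np" S] by (simp add: drop_take min_def)
  then show ?thesis unfolding config_fold by (simp add: take_map[symmetric] drop_map[symmetric])
qed

lemma cost_append: "cost (xs @ ys) = cost xs + cost ys"
  unfolding cost_def by simp

lemma cost_take_le: "cost (take N S) \<le> cost S"
  by (metis append_take_drop_id cost_append le_add1)

lemma cost_window:
  assumes "Np \<le> N"
  shows "cost (take N S) = cost (take Np S) + sum_list (map action_cost (map snd (drop Np (take N S))))"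
proof -
  have "take N S = take Np S @ drop Np (take N S)" using assms by (metis append_take_drop_id min.absorb1 take_take)
  then show ?thesis unfolding cost_def by (metis cost_append cost_def map_map)
qed

lemma covers_append:
  assumes "j < length B" shows "covers L0 (B @ T) r j = covers L0 B r j"
proof -
  have e: "(B @ T) ! j = B ! j" "take j (B @ T) = take j B" using assms by (auto simp: nth_append)
  show ?thesis unfolding covers_def config_def e using assms by simp
qed

lemma serves_append: "j < length B \<Longrightarrow> serves L0 (B @ T) r j = serves L0 B r j"
  unfolding serves_def using covers_append[of _ B L0 T r] by auto

lemma covers_append_right:
  "covers L0 (B @ T) r (length B + j) \<longleftrightarrow> j < length T \<and>
     (case snd (T ! j) of
        Access i \<Rightarrow> arr r \<le> fst (T ! j) \<and>
          pos (elem r) (fold (apply_action \<circ> snd) (take j T) (config L0 B (length B))) \<le> i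
      | Swap _ \<Rightarrow> False)"
proof -
  have e: "(B @ T) ! (length B + j) = T ! j" by simp
  show ?thesis unfolding covers_def config_append e by simp
qed

lemma serves_less_length: "serves L0 B r j \<Longrightarrow> j < length B"
  unfolding serves_def covers_def by simp

lemma covers_imp_serves:
  assumes "covers L0 B r j" shows "\<exists>j0\<le>j. serves L0 B r j0"
proof -
  let ?j0 = "LEAST j. covers L0 B r j"
  have "covers L0 B r ?j0" "?j0 \<le> j" using assms by (rule LeastI, rule Least_le)
  moreover have "\<forall>j'<?j0. \<not> covers L0 B r j'" using not_less_Least by blast
  ultimately show ?thesis unfolding serves_def by blast
qed

definition num_actions_until :: "schedule \<Rightarrow> real \<Rightarrow> nat" where
  "num_actions_until S \<tau> = length (takeWhile (\<lambda>a. fst a \<le> \<tau>) S)"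

lemma num_actions_until_le_length: "num_actions_until S \<tau> \<le> length S"
  unfolding num_actions_until_def by (rule length_takeWhile_le)

lemma time_le_if_less_num_actions_until:
  assumes "k < num_actions_until S \<tau>" shows "fst (S ! k) \<le> \<tau>"
proof -
  let ?T = "takeWhile (\<lambda>a. fst a \<le> \<tau>) S"
  have "?T ! k \<in> set ?T" using assms unfolding num_actions_until_def by simp
  moreover have "?T ! k = S ! k" using assms unfolding num_actions_until_def by (rule takeWhile_nth)
  ultimately show ?thesis by (metis (mono_tags, lifting) set_takeWhileD)
qed

lemma less_num_actions_until:
  assumes "sorted (map fst S)" "k < length S" "fst (S ! k) \<le> \<tau>"
  shows "k < num_actions_until S \<tau>"
proof (rule ccontr)
  let ?n = "num_actions_until S \<tau>"
  assume "\<not> k < ?n"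
  then have "?n < length S" "fst (S ! ?n) \<le> fst (S ! k)"
    using assms sorted_nth_mono[OF assms(1), of ?n k] by auto
  moreover have "?n < length S \<Longrightarrow> \<not> fst (S ! ?n) \<le> \<tau>"
    using nth_length_takeWhile[of "\<lambda>a. fst a \<le> \<tau>" S] unfolding num_actions_until_def by simp
  ultimately show False using assms(3) by simp
qed

lemma num_actions_until_mono:
  assumes "sorted (map fst S)" "\<tau> \<le> \<tau>'"
  shows "num_actions_until S \<tau> \<le> num_actions_until S \<tau>'"
proof (rule ccontr)
  let ?n = "num_actions_until S \<tau>'"
  assume "\<not> ?thesis"
  then have "?n < num_actions_until S \<tau>" by simp
  then have "fst (S ! ?n) \<le> \<tau>'" "?n < length S"
    using time_le_if_less_num_actions_until[of ?n S \<tau>] num_actions_until_le_length[of S \<tau>] assms(2)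
    by auto
  then show False using less_num_actions_until[OF assms(1)] by blast
qed

section \<open>The lazy algorithm\<close>

definition sorting_swaps :: "'a list \<Rightarrow> 'a list \<Rightarrow> action list" where
  "sorting_swaps x y = (SOME \<beta>. swap_actions (length x) \<beta> \<and> fold apply_action \<beta> x = y \<and> length \<beta> \<le> inversions x y)"

lemma sorting_swaps:
  assumes "distinct x" "distinct y" "set x = set y"
  shows "swap_actions (length x) (sorting_swaps x y)" "fold apply_action (sorting_swaps x y) x = y"
    "length (sorting_swaps x y) \<le> inversions x y"
proof -
  obtain \<beta> where "swap_actions (length x) \<beta> \<and> fold apply_action \<beta> x = y \<and> length \<beta> \<le> inversions x y"
    using swap_actions_sorting[OF assms] by blast
  then have "swap_actions (length x) (sorting_swaps x y) \<and> fold apply_action (sorting_swaps x y) x = y \<and>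
    length (sorting_swaps x y) \<le> inversions x y"
    unfolding sorting_swaps_def by (rule someI)
  then show "swap_actions (length x) (sorting_swaps x y)" "fold apply_action (sorting_swaps x y) x = y"
    "length (sorting_swaps x y) \<le> inversions x y" by auto
qed

lemma cost_Pair_swaps: "swap_actions n \<beta> \<Longrightarrow> cost (map (Pair \<tau>) \<beta>) = length \<beta>"
  unfolding swap_actions_def cost_def by (induction \<beta>) auto

definition block :: "'a list \<Rightarrow> 'a list \<Rightarrow> 'a set \<Rightarrow> real \<Rightarrow> schedule" where
  "block c c' W \<tau> = (let P = lower_set c c' W; m = move_to_front P c' in
     map (Pair \<tau>) (sorting_swaps c m @ Access (card P) # sorting_swaps m c'))"

definition sync_block :: "'a list \<Rightarrow> schedule \<Rightarrow> nat \<Rightarrow> real \<Rightarrow> schedule" where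
  "sync_block L0 S Np \<tau> = (let N = num_actions_until S \<tau>; c = config L0 S Np in
     block c (config L0 S N) (accessed (map snd (drop Np (take N S))) c) \<tau>)"

fun lazy_schedule :: "'a list \<Rightarrow> 'a request list \<Rightarrow> schedule \<Rightarrow> real list \<Rightarrow> schedule \<Rightarrow> nat \<Rightarrow> schedule" where
  "lazy_schedule L0 \<sigma> S [] B Np = B"
| "lazy_schedule L0 \<sigma> S (\<tau> # ds) B Np =
     (if \<exists>r\<in>set \<sigma>. dl r = \<tau> \<and> \<not> (\<exists>j. covers L0 B r j)
      then lazy_schedule L0 \<sigma> S ds (B @ sync_block L0 S Np \<tau>) (num_actions_until S \<tau>)
      else lazy_schedule L0 \<sigma> S ds B Np)"

text \<open>B has replayed the first Np actions of S, and ds are the deadlines still to be processed.\<close>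

definition lazy_invariant :: "'a list \<Rightarrow> 'a request list \<Rightarrow> schedule \<Rightarrow> real list \<Rightarrow> schedule \<Rightarrow> nat \<Rightarrow> bool" where
  "lazy_invariant L0 \<sigma> S ds B Np \<longleftrightarrow>
    sched_ok (length L0) B \<and>
    (\<forall>x\<in>set B. \<forall>\<tau>\<in>set ds. fst x < \<tau>) \<and>
    config L0 B (length B) = config L0 S Np \<and>
    (\<forall>\<tau>\<in>set ds. Np \<le> num_actions_until S \<tau>) \<and>
    cost B \<le> cost (take Np S) \<and>
    (\<forall>r\<in>set \<sigma>. \<forall>k<Np. covers L0 S r k \<longrightarrow> (\<exists>j. covers L0 B r j)) \<and>
    deadline_lazy L0 \<sigma> B \<and>
    (\<forall>r\<in>set \<sigma>. dl r \<notin> set ds \<longrightarrow> (\<exists>j. serves L0 B r j \<and> fst (B ! j) \<le> dl r))"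

text \<open>The block T that B appends at deadline \<open>\<tau>\<close> because r0 is still uncovered: c0 and c1 are
  A's lists after its first Np and N actions, and J is the position of T's access in \<open>B @ T\<close>.\<close>

locale sync_step =
  fixes L0 :: "'a list" and \<sigma> :: "'a request list" and S :: schedule
    and \<tau> :: real and ds :: "real list" and B :: schedule and Np :: nat and r0 :: "'a request"
  assumes distinct_L0: "distinct L0" and wf: "wf_input L0 \<sigma>" and valid_S: "valid L0 \<sigma> S"
    and sorted_deadlines: "sorted_wrt (<) (\<tau> # ds)"
    and invariant: "lazy_invariant L0 \<sigma> S (\<tau> # ds) B Np"
    and pending: "r0 \<in> set \<sigma>" "dl r0 = \<tau>" "\<not> (\<exists>j. covers L0 B r0 j)"
begin

abbreviation "N \<equiv> num_actions_until S \<tau>"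
abbreviation "c0 \<equiv> config L0 S Np"
abbreviation "c1 \<equiv> config L0 S N"
abbreviation "\<alpha> \<equiv> map snd (drop Np (take N S))"
abbreviation "W \<equiv> accessed \<alpha> c0"
abbreviation "P \<equiv> lower_set c0 c1 W"
abbreviation "m \<equiv> move_to_front P c1"
abbreviation "\<beta>1 \<equiv> sorting_swaps c0 m"
abbreviation "\<beta>2 \<equiv> sorting_swaps m c1"
abbreviation "T \<equiv> sync_block L0 S Np \<tau>"
abbreviation "J \<equiv> length B + length \<beta>1"

lemma S_ok: "sched_ok (length L0) S" "sorted (map fst S)" "\<forall>x\<in>set S. action_ok (length L0) (snd x)"
  using valid_S unfolding valid_def sched_ok_def by auto

lemma B_ok: "sched_ok (length L0) B"
  using invariant unfolding lazy_invariant_def by simp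

lemma B_before: "\<forall>x\<in>set B. \<forall>\<tau>'\<in>set (\<tau> # ds). fst x < \<tau>'"
  using invariant unfolding lazy_invariant_def by simp

lemma B_config: "config L0 B (length B) = c0"
  using invariant unfolding lazy_invariant_def by simp

lemma cost_B: "cost B \<le> cost (take Np S)"
  using invariant unfolding lazy_invariant_def by simp

lemma B_covers_earlier: "r \<in> set \<sigma> \<Longrightarrow> k < Np \<Longrightarrow> covers L0 S r k \<Longrightarrow> \<exists>j. covers L0 B r j"
  using invariant unfolding lazy_invariant_def by simp

lemma B_lazy: "deadline_lazy L0 \<sigma> B"
  using invariant unfolding lazy_invariant_def by simp

lemma B_serves: "r \<in> set \<sigma> \<Longrightarrow> dl r \<notin> set (\<tau> # ds) \<Longrightarrow> \<exists>j. serves L0 B r j \<and> fst (B ! j) \<le> dl r"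
  using invariant unfolding lazy_invariant_def by simp

lemma Np_le_N: "Np \<le> N"
  using invariant unfolding lazy_invariant_def by simp

lemma configs_ok:
  "length c0 = length L0" "set c0 = set L0" "distinct c0"
  "length c1 = length L0" "set c1 = set L0" "distinct c1"
  using config_ok[OF S_ok(1) distinct_L0] by auto

lemma length_\<alpha>: "length \<alpha> = N - Np"
  using Np_le_N num_actions_until_le_length[of S \<tau>] by simp

lemma \<alpha>_ok: "\<forall>a\<in>set \<alpha>. action_ok (length c0) a"
  using S_ok(3) configs_ok(1) by (auto dest: in_set_dropD in_set_takeD)

lemma c1_eq: "c1 = fold apply_action \<alpha> c0"
  using config_window[OF Np_le_N order_refl, of L0 S] length_\<alpha> by simp

lemma P_subset: "P \<subseteq> set L0"
  using lower_set_subset[of c0 c1 W] accessed_subset[OF \<alpha>_ok] configs_ok(2) by auto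

lemma m_ok: "distinct m" "set m = set L0" "length m = length L0"
  using configs_ok by auto

lemma T_eq: "T = map (Pair \<tau>) (\<beta>1 @ Access (card P) # \<beta>2)"
  unfolding sync_block_def block_def Let_def ..

lemma \<beta>_ok:
  "swap_actions (length L0) \<beta>1" "fold apply_action \<beta>1 c0 = m" "length \<beta>1 \<le> inversions c0 m"
  "swap_actions (length L0) \<beta>2" "fold apply_action \<beta>2 m = c1" "length \<beta>2 \<le> inversions m c1"
  using sorting_swaps[of c0 m] sorting_swaps[of m c1] configs_ok m_ok by auto

lemma cost_T: "cost T \<le> sum_list (map action_cost \<alpha>)"
proof -
  have "cost T = length \<beta>1 + card P + length \<beta>2"
    using T_eq cost_Pair_swaps[OF \<beta>_ok(1)] cost_Pair_swaps[OF \<beta>_ok(4)] by (simp add: cost_append cost_def)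
  also have "\<dots> \<le> inversions c0 m + inversions m c1 + card P" using \<beta>_ok(3,6) by simp
  also have "\<dots> \<le> inversions c0 c1 + card P"
    using inversions_move_to_front[of c0 c1 P] configs_ok lower_set_downward[of c0 c1] by simp
  also have "\<dots> \<le> sum_list (map action_cost \<alpha>)"
    using potential_bound[OF configs_ok(3) \<alpha>_ok] c1_eq by simp
  finally show ?thesis .
qed

lemma T_shape:
  "length T = Suc (length \<beta>1 + length \<beta>2)"
  "\<forall>x\<in>set T. fst x = \<tau>"
  "T ! length \<beta>1 = (\<tau>, Access (card P))"
  "take (length \<beta>1) T = map (Pair \<tau>) \<beta>1"
  using T_eq by (auto simp: nth_append)

lemma T_Swap:
  assumes "j < length T" "j \<noteq> length \<beta>1"
  obtains i where "snd (T ! j) = Swap i" "1 \<le> i" "i < length L0"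
proof -
  have "snd (T ! j) \<in> set \<beta>1 \<union> set \<beta>2"
    using assms T_eq by (auto simp: nth_append nth_Cons' split: if_splits)
  then show thesis using that \<beta>_ok(1,4) unfolding swap_actions_def by blast
qed

lemma config_at_access: "config L0 (B @ T) J = m"
  using config_append[of L0 B T "length \<beta>1"] T_shape(4) B_config \<beta>_ok(2)
  by (simp add: fold_map comp_def)

lemma config_after_T: "config L0 (B @ T) (length (B @ T)) = c1"
  using config_append[of L0 B T "length T"] B_config \<beta>_ok(2,5) T_eq
  by (simp add: fold_map comp_def)

lemma covers_access_iff:
  assumes "r \<in> set \<sigma>"
  shows "covers L0 (B @ T) r J \<longleftrightarrow> arr r \<le> \<tau> \<and> elem r \<in> P"
proof -
  have "elem r \<in> set m" using assms wf m_ok(2) unfolding wf_input_def by simp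
  moreover have "set (take (card P) m) = P"
    using set_take_move_to_front[OF configs_ok(6)] P_subset configs_ok(5) by simp
  ultimately have "pos (elem r) m \<le> card P \<longleftrightarrow> elem r \<in> P" by (simp add: pos_le_iff_in_take)
  moreover have "(B @ T) ! J = (\<tau>, Access (card P))" using T_shape(3) by (simp add: nth_append)
  ultimately show ?thesis
    unfolding covers_def config_at_access using T_shape(1) by simp
qed

text \<open>Every element accessed by A between its actions Np and N lies in P, so B's single access
  covers every request that A covers in this window.\<close>

lemma covers_at_access:
  assumes r: "r \<in> set \<sigma>" "Np \<le> k" "k < N" "covers L0 S r k"
  shows "covers L0 (B @ T) r J"
proof -
  obtain i where Access: "snd (S ! k) = Access i" and arr: "arr r \<le> fst (S ! k)"
      and pos: "pos (elem r) (config L0 S k) \<le> i"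
    using r(4) unfolding covers_def by (cases "snd (S ! k)") auto
  have k: "k - Np < length \<alpha>" using length_\<alpha> r(2,3) by simp
  have "\<alpha> ! (k - Np) = Access i"
  proof -
    have "drop Np (take N S) ! (k - Np) = S ! k"
      using r(2,3) num_actions_until_le_length[of S \<tau>] by simp
    then show ?thesis using k Access by simp
  qed
  with k have accessed: "set (take i (fold apply_action (take (k - Np) \<alpha>) c0)) \<subseteq> W"
    by (rule accessed_nth_Access)
  have "elem r \<in> set (config L0 S k)"
    using r(1) wf config_ok(2)[OF S_ok(1) distinct_L0] unfolding wf_input_def by simp
  then have "elem r \<in> set (take i (config L0 S k))" using pos by (simp add: pos_le_iff_in_take)
  also have "config L0 S k = fold apply_action (take (k - Np) \<alpha>) c0"
    using config_window[OF r(2) less_imp_le[OF r(3)]] .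
  also note accessed
  finally have "elem r \<in> W" .
  then have "elem r \<in> P" unfolding lower_set_def by blast
  moreover have "arr r \<le> \<tau>"
    using arr time_le_if_less_num_actions_until[OF r(3)] by simp
  ultimately show ?thesis using covers_access_iff[OF r(1)] by simp
qed

lemma only_access_covers:
  assumes "length B \<le> j" "j \<noteq> J"
  shows "\<not> covers L0 (B @ T) r j"
proof
  assume cov: "covers L0 (B @ T) r j"
  obtain j' where j: "j = length B + j'" using assms(1) le_Suc_ex by blast
  then have "j' < length T" "j' \<noteq> length \<beta>1"
    using cov assms(2) covers_append_right[of L0 B T r j'] by auto
  then obtain i where "snd (T ! j') = Swap i" by (rule T_Swap)
  then show False using cov covers_append_right[of L0 B T r j'] unfolding j by simp
qed

lemma serves_at_access:
  assumes r: "r \<in> set \<sigma>" "dl r = \<tau>" "\<not> (\<exists>j. covers L0 B r j)"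
  shows "serves L0 (B @ T) r J"
proof -
  obtain k where k: "serves L0 S r k" "fst (S ! k) \<le> \<tau>" using valid_S r(1,2) unfolding valid_def by auto
  then have cov: "covers L0 S r k" "k < length S" unfolding serves_def covers_def by auto
  then have "k < N" using less_num_actions_until[OF S_ok(2)] k(2) by blast
  moreover have "Np \<le> k" using B_covers_earlier[OF r(1) _ cov(1)] r(3) by (meson not_le)
  ultimately have "covers L0 (B @ T) r J" using covers_at_access r(1) cov(1) by blast
  moreover have "\<not> covers L0 (B @ T) r j" if "j < J" for j
  proof (cases "j < length B")
    case True then show ?thesis using r(3) covers_append by blast
  next
    case False then show ?thesis using only_access_covers that by simp
  qed
  ultimately show ?thesis unfolding serves_def by blast
qed

lemma access_ok: "action_ok (length L0) (Access (card P))"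
proof -
  have "elem r0 \<in> P" using serves_at_access[OF pending] covers_access_iff[OF pending(1)]
    unfolding serves_def by blast
  moreover have "finite P" using P_subset by (rule finite_subset) simp
  ultimately have "card P \<noteq> 0" by auto
  moreover have "card P \<le> length L0"
    using card_mono[OF _ P_subset] distinct_card[OF distinct_L0] by simp
  ultimately show ?thesis by simp
qed

lemma sched_ok_append: "sched_ok (length L0) (B @ T)"
proof -
  have "sorted (map fst T)" using T_shape(2) by (simp add: sorted_iff_nth_mono)
  moreover have "\<forall>x\<in>set B. \<forall>y\<in>set T. fst x \<le> fst y" using B_before T_shape(2) by fastforce
  moreover have "\<forall>x\<in>set T. action_ok (length L0) (snd x)"
    using T_eq access_ok \<beta>_ok(1,4) unfolding swap_actions_def by auto
  ultimately show ?thesis using B_ok unfolding sched_ok_def by (auto simp: sorted_append)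
qed

lemma before_remaining_deadlines: "\<forall>x\<in>set (B @ T). \<forall>\<tau>'\<in>set ds. fst x < \<tau>'"
  using B_before T_shape(2) sorted_deadlines by fastforce

lemma N_le_remaining: "\<forall>\<tau>'\<in>set ds. N \<le> num_actions_until S \<tau>'"
  using num_actions_until_mono[OF S_ok(2)] sorted_deadlines by (simp add: less_imp_le)

lemma cost_append_le: "cost (B @ T) \<le> cost (take N S)"
  using cost_B cost_T cost_window[OF Np_le_N, of S] by (simp add: cost_append)

lemma covers_append_if_covers:
  assumes "r \<in> set \<sigma>" "k < N" "covers L0 S r k"
  shows "\<exists>j. covers L0 (B @ T) r j"
proof (cases "k < Np")
  case True
  then obtain j where "covers L0 B r j" using B_covers_earlier assms by blast
  moreover from this have "j < length B" unfolding covers_def by simp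
  ultimately show ?thesis using covers_append by blast
next
  case False
  then have "Np \<le> k" by simp
  then show ?thesis using covers_at_access[OF assms(1) _ assms(2,3)] by blast
qed

lemma serves_append_left:
  assumes "serves L0 B r j"
  shows "serves L0 (B @ T) r j" "(B @ T) ! j = B ! j"
  using serves_append[OF serves_less_length[OF assms], of L0 T r] assms serves_less_length[OF assms]
  by (simp_all add: nth_append)

lemma time_at_access: "fst ((B @ T) ! J) = \<tau>"
  using T_shape(3) by (simp add: nth_append)

lemma deadline_lazy_append: "deadline_lazy L0 \<sigma> (B @ T)"
  unfolding deadline_lazy_def
proof (intro allI impI)
  fix j assume "j < length (B @ T)" "\<exists>r\<in>set \<sigma>. serves L0 (B @ T) r j"
  then obtain r where r: "r \<in> set \<sigma>" "serves L0 (B @ T) r j" by blast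
  show "\<exists>r\<in>set \<sigma>. serves L0 (B @ T) r j \<and> dl r = fst ((B @ T) ! j)"
  proof (cases "j < length B")
    case True
    then have "serves L0 B r j" using r(2) serves_append[OF True, of L0 T r] by simp
    then obtain r' where r': "r' \<in> set \<sigma>" "serves L0 B r' j" "dl r' = fst (B ! j)"
      using r(1) True B_lazy unfolding deadline_lazy_def by blast
    show ?thesis using r' serves_append_left[OF r'(2)] by auto
  next
    case False
    have "covers L0 (B @ T) r j" using r(2) unfolding serves_def by simp
    then have "j = J" using only_access_covers[of j r] False by linarith
    then show ?thesis using serves_at_access[OF pending] pending(1,2) time_at_access by auto
  qed
qed

lemma served_append:
  assumes r: "r \<in> set \<sigma>" "dl r \<notin> set ds"
  shows "\<exists>j. serves L0 (B @ T) r j \<and> fst ((B @ T) ! j) \<le> dl r"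
proof -
  consider "dl r = \<tau>" "\<exists>j. covers L0 B r j" | "dl r = \<tau>" "\<not> (\<exists>j. covers L0 B r j)" | "dl r \<noteq> \<tau>"
    by blast
  then show ?thesis
  proof cases
    case 1
    then obtain j where j: "serves L0 B r j" using covers_imp_serves by blast
    then have "B ! j \<in> set B" using serves_less_length nth_mem by blast
    then have "fst (B ! j) \<le> dl r" using B_before 1(1) by fastforce
    then show ?thesis using serves_append_left[OF j] by auto
  next
    case 2
    then show ?thesis using serves_at_access[OF r(1)] time_at_access by auto
  next
    case 3
    then have "dl r \<notin> set (\<tau> # ds)" using r(2) by simp
    then obtain j where j: "serves L0 B r j" "fst (B ! j) \<le> dl r" using B_serves[OF r(1)] by blast
    then show ?thesis using serves_append_left[OF j(1)] by auto
  qed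
qed

lemma lazy_invariant_sync: "lazy_invariant L0 \<sigma> S ds (B @ T) N"
  unfolding lazy_invariant_def
  using sched_ok_append before_remaining_deadlines config_after_T N_le_remaining cost_append_le
    covers_append_if_covers deadline_lazy_append served_append by blast

end

lemma lazy_invariant_skip:
  assumes inv: "lazy_invariant L0 \<sigma> S (\<tau> # ds) B Np"
    and covered: "\<not> (\<exists>r\<in>set \<sigma>. dl r = \<tau> \<and> \<not> (\<exists>j. covers L0 B r j))"
  shows "lazy_invariant L0 \<sigma> S ds B Np"
proof -
  have "\<exists>j. serves L0 B r j \<and> fst (B ! j) \<le> dl r" if r: "r \<in> set \<sigma>" "dl r \<notin> set ds" for r
  proof (cases "dl r = \<tau>")
    case True
    then obtain j where "serves L0 B r j" using covered r(1) covers_imp_serves by blast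
    moreover from this have "B ! j \<in> set B" using serves_less_length nth_mem by blast
    ultimately show ?thesis using inv True unfolding lazy_invariant_def by fastforce
  next
    case False
    then show ?thesis using inv r unfolding lazy_invariant_def by simp
  qed
  then show ?thesis using inv unfolding lazy_invariant_def by simp
qed

lemma lazy_invariant_lazy_schedule:
  assumes "distinct L0" "wf_input L0 \<sigma>" "valid L0 \<sigma> S"
  shows "sorted_wrt (<) ds \<Longrightarrow> lazy_invariant L0 \<sigma> S ds B Np \<Longrightarrow>
    \<exists>Np'. lazy_invariant L0 \<sigma> S [] (lazy_schedule L0 \<sigma> S ds B Np) Np'"
proof (induction ds arbitrary: B Np)
  case (Cons \<tau> ds)
  show ?case
  proof (cases "\<exists>r\<in>set \<sigma>. dl r = \<tau> \<and> \<not> (\<exists>j. covers L0 B r j)")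
    case True
    then obtain r0 where "sync_step L0 \<sigma> S \<tau> ds B Np r0"
      using assms Cons.prems unfolding sync_step_def by blast
    then have "lazy_invariant L0 \<sigma> S ds (B @ sync_block L0 S Np \<tau>) (num_actions_until S \<tau>)"
      by (rule sync_step.lazy_invariant_sync)
    moreover have "lazy_schedule L0 \<sigma> S (\<tau> # ds) B Np =
      lazy_schedule L0 \<sigma> S ds (B @ sync_block L0 S Np \<tau>) (num_actions_until S \<tau>)"
      using True by (simp only: lazy_schedule.simps if_True)
    ultimately show ?thesis using Cons.IH Cons.prems(1) by simp
  next
    case False
    then have "lazy_invariant L0 \<sigma> S ds B Np" using Cons.prems(2) lazy_invariant_skip by blast
    moreover have "lazy_schedule L0 \<sigma> S (\<tau> # ds) B Np = lazy_schedule L0 \<sigma> S ds B Np"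
      using False by (simp only: lazy_schedule.simps if_False)
    ultimately show ?thesis using Cons.IH Cons.prems(1) by simp
  qed
qed auto

lemma lazy_invariant_init: "lazy_invariant L0 \<sigma> S (sorted_list_of_set (dl ` set \<sigma>)) [] 0"
  unfolding lazy_invariant_def deadline_lazy_def sched_ok_def cost_def config_def covers_def by simp

lemma lazy_invariant_final:
  assumes "lazy_invariant L0 \<sigma> S [] B Np"
  shows "valid L0 \<sigma> B \<and> deadline_lazy L0 \<sigma> B \<and> cost B \<le> cost S"
  using assms cost_take_le[of Np S] unfolding lazy_invariant_def valid_def by auto

theorem mainTheorem7:
  fixes L0 :: "'a list" and A :: "'a request list \<Rightarrow> schedule"
  assumes "distinct L0"
    and "\<forall>\<sigma>. wf_input L0 \<sigma> \<longrightarrow> valid L0 \<sigma> (A \<sigma>)"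
  shows "\<exists>B :: 'a request list \<Rightarrow> schedule. \<forall>\<sigma>. wf_input L0 \<sigma> \<longrightarrow>
           valid L0 \<sigma> (B \<sigma>) \<and> deadline_lazy L0 \<sigma> (B \<sigma>) \<and> cost (B \<sigma>) \<le> cost (A \<sigma>)"
proof (intro exI allI impI)
  fix \<sigma> assume wf: "wf_input L0 \<sigma>"
  let ?ds = "sorted_list_of_set (dl ` set \<sigma>)"
  have "sorted_wrt (<) ?ds" by (rule strict_sorted_list_of_set)
  then obtain Np where "lazy_invariant L0 \<sigma> (A \<sigma>) [] (lazy_schedule L0 \<sigma> (A \<sigma>) ?ds [] 0) Np"
    using lazy_invariant_lazy_schedule[OF assms(1) wf] assms(2) wf lazy_invariant_init by blast
  then show "valid L0 \<sigma> (lazy_schedule L0 \<sigma> (A \<sigma>) ?ds [] 0) \<and>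
      deadline_lazy L0 \<sigma> (lazy_schedule L0 \<sigma> (A \<sigma>) ?ds [] 0) \<and>
      cost (lazy_schedule L0 \<sigma> (A \<sigma>) ?ds [] 0) \<le> cost (A \<sigma>)"
    by (rule lazy_invariant_final)
qed

end
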